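(* Assume the seeds are i.i.d. uniform on $[n]$. Fix $m\in\mathbb N$. Let $\mathcal E^*(m)$ be the set of maximizers of $\eta\mapsto p(\infty,m,\eta)$ over $[0,\tfrac12]$, and assume $\mathcal E^*(m)\subset(0,\tfrac12)$. For each even $n\ge6$ let $l_{opt}(n,m)\in\operatorname{arg\,max}_{l\in\{2,\dots,n/2-1\}}p_1(n,m,l)$. Then $$\lim_{n\to\infty}\ \inf_{\eta^*\in\mathcal E^*(m)}\Bigl|\frac{l_{opt}(n,m)}{n}-\eta^*\Bigr|=0.$$ If moreover $\mathcal E^*(m)=\{\eta_{opt}(m)\}$ is a singleton, then $\lim_{n\to\infty}l_{opt}(n,m)/n=\eta_{opt}(m)$.
   Context: Discrete model: candidates $[n]$, $m$ voters; voter $j$ has the clockwise oriented preference list $(s_j,s_j+1,\dots,n,1,\dots,s_j-1)$ with seed $s_j$; seeds independent uniform on $[n]$. In an election among a non-empty $S\subseteq[n]$ each voter votes for the first candidate of $S$ in its list; $\Xi_S(i)$ is the number of votes for $i$. Two-round election with partition $(A,B)$: the winner of $A$ is the $a\in A$ with $\Xi_A(a)>\Xi_A(a')$ for all other $a'\in A$ (if none, nobody wins); likewise for $B$; between first-round winners $a,b$, $a$ wins iff $\Xi_{\{a,b\}}(a)>\Xi_{\{a,b\}}(b)$ (ties: nobody wins). $A^{(1,n,l)}=\{1,\dots,l\}\cup\{l+2i:1\le i\le(n-2l)/2\}$, $B^{(1,n,l)}=[n]\setminus A^{(1,n,l)}$, and $p_1(n,m,l)$ is the probability that candidate 1 wins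 with partition $(A^{(1,n,l)},B^{(1,n,l)})$. Continuous model: $U_1,\dots,U_m$ i.i.d. uniform on $[0,1)$, $N_{(a,b)}$ the number of $U_j$ in the arc $(a,b)$ mod 1; $p(\infty,m,\eta)=\mathsf P(N_{(1-\eta,1)}\ge2,\ N_{(0,\eta)}\ge2,\ N_{(0,\eta)}<m/2)$, equivalently the polynomial $\sum_{s=2}^{\lfloor (m-1)/2\rfloor}\sum_{t=2}^{m-s}\frac{m!}{s!\,t!\,(m-s-t)!}\eta^{s+t}(1-2\eta)^{m-s-t}$, considered for $\eta\in[0,\tfrac12]$. *)

theory Defs
  imports "HOL-Analysis.Analysis" "HOL-Library.FuncSet"
begin

text \<open>Candidates are 1..n. A voter with seed s ranks candidates clockwise
  s, s+1, ..., n, 1, ..., s-1; the position of candidate i in that list is cdist n s i.\<close>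
definition cdist :: "nat \<Rightarrow> nat \<Rightarrow> nat \<Rightarrow> nat" where
  "cdist n s i = (i + n - s) mod n"

definition first_in :: "nat \<Rightarrow> nat set \<Rightarrow> nat \<Rightarrow> nat" where
  "first_in n S s = (THE a. a \<in> S \<and> (\<forall>b\<in>S. cdist n s a \<le> cdist n s b))"

definition Xi :: "nat \<Rightarrow> nat \<Rightarrow> (nat \<Rightarrow> nat) \<Rightarrow> nat set \<Rightarrow> nat \<Rightarrow> nat" where
  "Xi n m seeds S i = card {j \<in> {..<m}. first_in n S (seeds j) = i}"

definition winner :: "nat \<Rightarrow> nat \<Rightarrow> (nat \<Rightarrow> nat) \<Rightarrow> nat set \<Rightarrow> nat option" where
  "winner n m seeds S =
     (if \<exists>a\<in>S. \<forall>a'\<in>S. a' \<noteq> a \<longrightarrow> Xi n m seeds S a > Xi n m seeds S a'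
      then Some (THE a. a \<in> S \<and> (\<forall>a'\<in>S. a' \<noteq> a \<longrightarrow> Xi n m seeds S a > Xi n m seeds S a'))
      else None)"

definition wins_two_round ::
  "nat \<Rightarrow> nat \<Rightarrow> (nat \<Rightarrow> nat) \<Rightarrow> nat set \<Rightarrow> nat set \<Rightarrow> nat \<Rightarrow> bool" where
  "wins_two_round n m seeds A B i =
     (\<exists>a b. winner n m seeds A = Some a \<and> winner n m seeds B = Some b \<and>
        ((i = a \<and> Xi n m seeds {a, b} a > Xi n m seeds {a, b} b) \<or>
         (i = b \<and> Xi n m seeds {a, b} b > Xi n m seeds {a, b} a)))"

definition Apart :: "nat \<Rightarrow> nat \<Rightarrow> nat set" where
  "Apart n l = {1..l} \<union> {l + 2 * i | i. 1 \<le> i \<and> i \<le> (n - 2 * l) div 2}"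

definition Bpart :: "nat \<Rightarrow> nat \<Rightarrow> nat set" where
  "Bpart n l = {1..n} - Apart n l"

text \<open>p_1(n,m,l): seeds i.i.d. uniform on [n], i.e. uniform on the n^m seed vectors.\<close>
definition p1 :: "nat \<Rightarrow> nat \<Rightarrow> nat \<Rightarrow> real" where
  "p1 n m l = real (card {seeds \<in> {..<m} \<rightarrow>\<^sub>E {1..n}.
                    wins_two_round n m seeds (Apart n l) (Bpart n l) 1}) / real n ^ m"

text \<open>p(infinity,m,eta), as the polynomial given in the paper.\<close>
definition p_inf :: "nat \<Rightarrow> real \<Rightarrow> real" where
  "p_inf m \<eta> = (\<Sum>s = 2..(m - 1) div 2. \<Sum>t = 2..m - s.
      fact m / (fact s * fact t * fact (m - s - t)) * \<eta> ^ (s + t) * (1 - 2 * \<eta>) ^ (m - s - t))"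

definition Estar :: "nat \<Rightarrow> real set" where
  "Estar m = {\<eta> \<in> {0..1/2}. \<forall>\<eta>' \<in> {0..1/2}. p_inf m \<eta>' \<le> p_inf m \<eta>}"

end

(*
  Call a seed vector sparse if no seed is 1 and no two seeds are equal or adjacent. Then in the
  first round every candidate of A other than 1, and every candidate of B other than l + 1, gets
  at most one vote, so candidate 1 wins iff at least two seeds lie in [n - l + 1, n], at least two
  in [2, l + 1], and fewer than half of all seeds lie in [2, l + 1]. Counting such seed vectors by
  multinomials gives exactly n^m p_inf(l/n), while only O(n^(m-1)) seed vectors are not sparse;
  hence |p1(n,m,l) - p_inf(l/n)| <= (m + 2m^2)/n. Since l_opt(n) does at least as well as the
  admissible choice floor(n eta) for a maximiser eta in (0, 1/2), p_inf(l_opt(n)/n) tends to the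
  maximum of p_inf, and compactness of [0, 1/2] then forces l_opt(n)/n towards the maximisers.
*)

theory Submission
  imports Defs
begin

section \<open>Ballots on the circle\<close>

lemma cdist_eq:
  assumes "1 \<le> s" "s \<le> n" "1 \<le> i" "i \<le> n"
  shows "cdist n s i = (if s \<le> i then i - s else i + n - s)"
proof (cases "s \<le> i")
  case True
  then have "cdist n s i = (i - s + n) mod n" by (simp add: cdist_def)
  also have "\<dots> = i - s" using assms by (simp add: mod_less)
  finally show ?thesis using True by simp
qed (use assms in \<open>simp add: cdist_def\<close>)

lemma first_in_eqI:
  assumes "S \<subseteq> {1..n}" "s \<in> {1..n}" "a \<in> S" "\<forall>b\<in>S. cdist n s a \<le> cdist n s b"
  shows "first_in n S s = a"
  unfolding first_in_def
proof (rule the_equality)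
  fix b assume b: "b \<in> S \<and> (\<forall>c\<in>S. cdist n s b \<le> cdist n s c)"
  then have "cdist n s a = cdist n s b" using assms(3,4) by (meson antisym)
  moreover have "a \<in> {1..n}" "b \<in> {1..n}" using assms(1,3) b by auto
  ultimately show "b = a" using assms(2) by (auto simp: cdist_eq split: if_splits)
qed (use assms in blast)

lemma first_in_eq_first_after:
  assumes "S \<subseteq> {1..n}" "s \<in> {1..n}" "c \<in> S" "s \<le> c" "\<forall>b\<in>S. b < s \<or> c \<le> b"
  shows "first_in n S s = c"
  using assms by (intro first_in_eqI) (auto simp: cdist_eq subset_iff)

lemma first_in_wraps_to_1:
  assumes "S \<subseteq> {1..n}" "s \<in> {1..n}" "1 \<in> S" "\<forall>b\<in>S. b < s"
  shows "first_in n S s = 1"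
  using assms by (intro first_in_eqI) (auto simp: cdist_eq subset_iff)

lemma first_in_in:
  assumes "S \<subseteq> {1..n}" "S \<noteq> {}" "s \<in> {1..n}"
  shows "first_in n S s \<in> S"
proof -
  have "finite S" using assms(1) finite_subset by blast
  then have "Min (cdist n s ` S) \<in> cdist n s ` S" using assms(2) by simp
  then obtain a where "a \<in> S" "cdist n s a = Min (cdist n s ` S)" by auto
  with \<open>finite S\<close> have "first_in n S s = a" by (intro first_in_eqI[OF assms(1,3)]) auto
  with \<open>a \<in> S\<close> show ?thesis by simp
qed

lemma mem_Apart_iff:
  "b \<in> Apart n l \<longleftrightarrow> (1 \<le> b \<and> b \<le> l) \<or> (l < b \<and> b + l \<le> n \<and> even (b - l))"
proof -
  have "(\<exists>i. b = l + 2 * i \<and> 1 \<le> i \<and> i \<le> (n - 2 * l) div 2) \<longleftrightarrow>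
      l < b \<and> b + l \<le> n \<and> even (b - l)" (is "?L \<longleftrightarrow> ?R")
  proof
    assume ?R
    then obtain i where "b - l = 2 * i" by (meson evenE)
    with \<open>?R\<close> show ?L by (intro exI[of _ i]) auto
  qed auto
  then show ?thesis unfolding Apart_def by auto
qed

lemma mem_Bpart_iff:
  "b \<in> Bpart n l \<longleftrightarrow> 1 \<le> b \<and> b \<le> n \<and> \<not> ((1 \<le> b \<and> b \<le> l) \<or> (l < b \<and> b + l \<le> n \<and> even (b - l)))"
  by (auto simp: Bpart_def mem_Apart_iff)

(* Closed forms of first_in for the elections among A, among B, and in the final between 1 and l + 1. *)
definition voteA :: "nat \<Rightarrow> nat \<Rightarrow> nat \<Rightarrow> nat" where
  "voteA n l s = (if n - l < s then 1 else if s \<le> l \<or> even (s - l) then s else s + 1)"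

definition voteB :: "nat \<Rightarrow> nat \<Rightarrow> nat \<Rightarrow> nat" where
  "voteB n l s = (if s \<le> l + 1 then l + 1 else if s \<le> n - l \<and> even (s - l) then s + 1 else s)"

definition vote_final :: "nat \<Rightarrow> nat \<Rightarrow> nat" where
  "vote_final l s = (if 2 \<le> s \<and> s \<le> l + 1 then l + 1 else 1)"

lemma Apart_subset: "2 * l + 2 \<le> n \<Longrightarrow> Apart n l \<subseteq> {1..n}"
  by (auto simp: mem_Apart_iff)

lemma Bpart_subset: "Bpart n l \<subseteq> {1..n}"
  by (auto simp: Bpart_def)

lemma first_in_Apart:
  assumes n: "even n" "2 * l + 2 \<le> n" "2 \<le> l" and s: "s \<in> {1..n}"
  shows "first_in n (Apart n l) s = voteA n l s"
proof -
  note first_after = first_in_eq_first_after[OF Apart_subset[OF n(2)] s]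
  consider "n - l < s" | "s \<in> Apart n l" | "s \<notin> Apart n l" "s \<le> n - l" by linarith
  then show ?thesis
  proof cases
    case 1
    then have "first_in n (Apart n l) s = 1"
      using n s by (intro first_in_wraps_to_1[OF Apart_subset[OF n(2)]]) (auto simp: mem_Apart_iff)
    then show ?thesis using 1 by (simp add: voteA_def)
  next
    case 2
    then show ?thesis using n s by (auto simp: voteA_def mem_Apart_iff intro!: first_after)
  next
    case 3
    then have "l < s" "odd (s - l)" using s by (auto simp: mem_Apart_iff)
    moreover have "s \<noteq> n - l" using n(1) \<open>odd (s - l)\<close> by auto
    ultimately have "s + 1 \<in> Apart n l" using 3 by (auto simp: mem_Apart_iff)
    moreover have "b < s \<or> s + 1 \<le> b" if "b \<in> Apart n l" for b
      using that 3(1) by (cases "b = s") auto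
    ultimately have "first_in n (Apart n l) s = s + 1" by (intro first_after) auto
    then show ?thesis using 3 \<open>l < s\<close> \<open>odd (s - l)\<close> by (simp add: voteA_def)
  qed
qed

lemma first_in_Bpart:
  assumes n: "even n" "2 * l + 2 \<le> n" "2 \<le> l" and s: "s \<in> {1..n}"
  shows "first_in n (Bpart n l) s = voteB n l s"
proof -
  note first_after = first_in_eq_first_after[OF Bpart_subset s]
  consider "s \<le> l + 1" | "s \<in> Bpart n l" "l + 1 < s" | "s \<notin> Bpart n l" "l + 1 < s" by linarith
  then show ?thesis
  proof cases
    case 1
    then have "first_in n (Bpart n l) s = l + 1"
      using n by (intro first_after) (auto simp: mem_Bpart_iff)
    then show ?thesis using 1 by (simp add: voteB_def)
  next
    case 2
    then have "first_in n (Bpart n l) s = s" by (intro first_after) auto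
    then show ?thesis using 2 by (auto simp: voteB_def mem_Bpart_iff)
  next
    case 3
    then have "s + l \<le> n" "even (s - l)" using s by (auto simp: mem_Bpart_iff)
    then have "s + 1 \<in> Bpart n l" using 3(2) n(3) by (auto simp: mem_Bpart_iff)
    moreover have "b < s \<or> s + 1 \<le> b" if "b \<in> Bpart n l" for b
      using that 3(1) by (cases "b = s") auto
    ultimately have "first_in n (Bpart n l) s = s + 1" by (intro first_after) auto
    then show ?thesis using 3 \<open>s + l \<le> n\<close> \<open>even (s - l)\<close> by (simp add: voteB_def)
  qed
qed

lemma first_in_final:
  assumes "2 * l + 2 \<le> n" "2 \<le> l" "s \<in> {1..n}"
  shows "first_in n {1, l + 1} s = vote_final l s"
proof -
  have S: "{1, l + 1} \<subseteq> {1..n}" using assms by auto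
  consider "s = 1" | "2 \<le> s" "s \<le> l + 1" | "l + 1 < s" using assms(3) by force
  then show ?thesis
  proof cases
    case 1
    then have "first_in n {1, l + 1} s = 1" using assms by (intro first_in_eq_first_after[OF S]) auto
    then show ?thesis using 1 by (simp add: vote_final_def)
  next
    case 2
    then have "first_in n {1, l + 1} s = l + 1" using assms by (intro first_in_eq_first_after[OF S]) auto
    then show ?thesis using 2 by (simp add: vote_final_def)
  next
    case 3
    then have "first_in n {1, l + 1} s = 1" using assms by (intro first_in_wraps_to_1[OF S]) auto
    then show ?thesis using 3 by (simp add: vote_final_def)
  qed
qed

section \<open>First-round winners for sparse seed vectors\<close>

lemma winner_eq_Some_iff:
  "winner n m seeds S = Some a \<longleftrightarrow>
     a \<in> S \<and> (\<forall>a'\<in>S. a' \<noteq> a \<longrightarrow> Xi n m seeds S a' < Xi n m seeds S a)"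
proof -
  define P where "P a \<longleftrightarrow> a \<in> S \<and> (\<forall>a'\<in>S. a' \<noteq> a \<longrightarrow> Xi n m seeds S a' < Xi n m seeds S a)" for a
  have "x = y" if "P x" "P y" for x y
  proof (rule ccontr)
    assume "x \<noteq> y"
    then have "Xi n m seeds S y < Xi n m seeds S x" "Xi n m seeds S x < Xi n m seeds S y"
      using that unfolding P_def by auto
    then show False by simp
  qed
  then have The_P: "(THE a. P a) = a" if "P a" for a
    using that by blast
  have "winner n m seeds S = (if \<exists>a. P a then Some (THE a. P a) else None)"
    unfolding winner_def P_def by (simp add: Bex_def)
  then show ?thesis
    unfolding P_def[symmetric] using The_P by (auto split: if_splits)
qed

lemma Xi_ge_1:
  assumes "j < m" "first_in n S (seeds j) = c"
  shows "1 \<le> Xi n m seeds S c"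
proof -
  have "j \<in> {j \<in> {..<m}. first_in n S (seeds j) = c}" using assms by simp
  then have "card {j \<in> {..<m}. first_in n S (seeds j) = c} > 0" by (subst card_gt_0_iff) auto
  then show ?thesis unfolding Xi_def by simp
qed

lemma winner_votes_ge_2:
  assumes "winner n m seeds S = Some a" "2 \<le> m" "\<forall>j<m. first_in n S (seeds j) \<in> S"
  shows "2 \<le> Xi n m seeds S a"
proof (rule ccontr)
  assume "\<not> 2 \<le> Xi n m seeds S a"
  moreover have "a \<in> S" "\<forall>a'\<in>S. a' \<noteq> a \<longrightarrow> Xi n m seeds S a' < Xi n m seeds S a"
    using assms(1) by (auto simp: winner_eq_Some_iff)
  ultimately have "first_in n S (seeds j) = a" if "j < m" for j
    using that assms(3) Xi_ge_1[where n = n and S = S and seeds = seeds, OF that refl] by fastforce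
  then have "{j \<in> {..<m}. first_in n S (seeds j) = a} = {..<m}" by auto
  then have "Xi n m seeds S a = m" unfolding Xi_def by simp
  with \<open>\<not> 2 \<le> Xi n m seeds S a\<close> assms(2) show False by simp
qed

lemma winner_eq_if_single_contender:
  assumes "c \<in> S" "2 \<le> m" "\<forall>j<m. first_in n S (seeds j) \<in> S"
    and "\<And>c'. c' \<noteq> c \<Longrightarrow> Xi n m seeds S c' \<le> 1"
  shows "winner n m seeds S = (if 2 \<le> Xi n m seeds S c then Some c else None)"
proof (cases "winner n m seeds S")
  case (Some a)
  then have "2 \<le> Xi n m seeds S a" using assms(2,3) by (rule winner_votes_ge_2)
  then have "a = c" using assms(4)[of a] by (cases "a = c") simp_all
  with Some \<open>2 \<le> Xi n m seeds S a\<close> show ?thesis by simp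
next
  case None
  have "\<not> 2 \<le> Xi n m seeds S c"
  proof
    assume "2 \<le> Xi n m seeds S c"
    then have "winner n m seeds S = Some c"
      using assms(1,4) by (force simp: winner_eq_Some_iff)
    with None show False by simp
  qed
  with None show ?thesis by simp
qed

definition sparse_seeds :: "nat \<Rightarrow> (nat \<Rightarrow> nat) \<Rightarrow> bool" where
  "sparse_seeds m seeds \<longleftrightarrow> (\<forall>j<m. seeds j \<noteq> 1) \<and>
     (\<forall>j<m. \<forall>j'<m. j \<noteq> j' \<longrightarrow> seeds j' \<noteq> seeds j \<and> seeds j' \<noteq> seeds j + 1)"

definition seed_count :: "nat \<Rightarrow> (nat \<Rightarrow> nat) \<Rightarrow> nat set \<Rightarrow> nat" where
  "seed_count m seeds T = card {j \<in> {..<m}. seeds j \<in> T}"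

lemma seed_count_Compl: "seed_count m seeds (- T) = m - seed_count m seeds T"
proof -
  have "{j \<in> {..<m}. seeds j \<in> - T} = {..<m} - {j \<in> {..<m}. seeds j \<in> T}" by auto
  also have "card \<dots> = m - card {j \<in> {..<m}. seeds j \<in> T}" by (subst card_Diff_subset) auto
  finally show ?thesis unfolding seed_count_def .
qed

lemma Xi_eq_seed_count:
  assumes "\<And>j. j < m \<Longrightarrow> first_in n S (seeds j) = c \<longleftrightarrow> seeds j \<in> T"
  shows "Xi n m seeds S c = seed_count m seeds T"
  unfolding Xi_def seed_count_def using assms by (intro arg_cong[where f = card] Collect_cong) auto

lemma Xi_le_1_if_sparse:
  assumes "sparse_seeds m seeds"
    and "\<And>j. j < m \<Longrightarrow> first_in n S (seeds j) = c \<Longrightarrow> seeds j = c \<or> seeds j + 1 = c"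
  shows "Xi n m seeds S c \<le> 1"
proof -
  have "j = j'" if "j < m" "j' < m" "first_in n S (seeds j) = c" "first_in n S (seeds j') = c" for j j'
  proof (rule ccontr)
    assume "j \<noteq> j'"
    then have "seeds j' \<noteq> seeds j" "seeds j' \<noteq> seeds j + 1" "seeds j \<noteq> seeds j' + 1"
      using assms(1) that(1,2) unfolding sparse_seeds_def by blast+
    then show False using assms(2)[OF that(1,3)] assms(2)[OF that(2,4)] by auto
  qed
  then show ?thesis unfolding Xi_def by (auto simp: card_le_Suc0_iff_eq)
qed

context
  fixes n l m :: nat and seeds :: "nat \<Rightarrow> nat"
  assumes n: "even n" "2 * l + 2 \<le> n" "2 \<le> l" and m: "2 \<le> m"
    and seeds: "seeds \<in> {..<m} \<rightarrow>\<^sub>E {1..n}" and sparse: "sparse_seeds m seeds"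
begin

lemma seeds_range: "j < m \<Longrightarrow> seeds j \<in> {1..n}"
  using PiE_mem[OF seeds] by simp

lemma seeds_ge_2: "j < m \<Longrightarrow> 2 \<le> seeds j"
  using sparse seeds_range by (force simp: sparse_seeds_def)

lemma winner_Apart:
  "winner n m seeds (Apart n l) = (if 2 \<le> seed_count m seeds {n - l + 1..n} then Some 1 else None)"
proof -
  have vote: "first_in n (Apart n l) (seeds j) = voteA n l (seeds j)" if "j < m" for j
    using first_in_Apart[OF n seeds_range[OF that]] .
  have in_A: "1 \<in> Apart n l" using n by (simp add: mem_Apart_iff)
  have votes_in_A: "\<forall>j<m. first_in n (Apart n l) (seeds j) \<in> Apart n l"
    using first_in_in[OF Apart_subset[OF n(2)] _ seeds_range] in_A by blast
  have other: "Xi n m seeds (Apart n l) c \<le> 1" if "c \<noteq> 1" for c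
  proof (rule Xi_le_1_if_sparse[OF sparse])
    fix j assume "j < m" "first_in n (Apart n l) (seeds j) = c"
    then show "seeds j = c \<or> seeds j + 1 = c" using that by (auto simp: vote voteA_def split: if_splits)
  qed
  have "Xi n m seeds (Apart n l) 1 = seed_count m seeds {n - l + 1..n}"
  proof (rule Xi_eq_seed_count)
    fix j assume j: "j < m"
    show "first_in n (Apart n l) (seeds j) = 1 \<longleftrightarrow> seeds j \<in> {n - l + 1..n}"
      using seeds_range[OF j] seeds_ge_2[OF j] by (auto simp: vote[OF j] voteA_def)
  qed
  with winner_eq_if_single_contender[OF in_A m votes_in_A other] show ?thesis by simp
qed

lemma winner_Bpart:
  "winner n m seeds (Bpart n l) = (if 2 \<le> seed_count m seeds {2..l + 1} then Some (l + 1) else None)"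
proof -
  have vote: "first_in n (Bpart n l) (seeds j) = voteB n l (seeds j)" if "j < m" for j
    using first_in_Bpart[OF n seeds_range[OF that]] .
  have in_B: "l + 1 \<in> Bpart n l" using n by (simp add: mem_Bpart_iff)
  have votes_in_B: "\<forall>j<m. first_in n (Bpart n l) (seeds j) \<in> Bpart n l"
    using first_in_in[OF Bpart_subset _ seeds_range] in_B by blast
  have other: "Xi n m seeds (Bpart n l) c \<le> 1" if "c \<noteq> l + 1" for c
  proof (rule Xi_le_1_if_sparse[OF sparse])
    fix j assume "j < m" "first_in n (Bpart n l) (seeds j) = c"
    then show "seeds j = c \<or> seeds j + 1 = c" using that by (auto simp: vote voteB_def split: if_splits)
  qed
  have "Xi n m seeds (Bpart n l) (l + 1) = seed_count m seeds {2..l + 1}"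
  proof (rule Xi_eq_seed_count)
    fix j assume j: "j < m"
    show "first_in n (Bpart n l) (seeds j) = l + 1 \<longleftrightarrow> seeds j \<in> {2..l + 1}"
      using seeds_ge_2[OF j] by (auto simp: vote[OF j] voteB_def)
  qed
  with winner_eq_if_single_contender[OF in_B m votes_in_B other] show ?thesis by simp
qed

lemma Xi_final:
  "Xi n m seeds {1, l + 1} (l + 1) = seed_count m seeds {2..l + 1}"
  "Xi n m seeds {1, l + 1} 1 = m - seed_count m seeds {2..l + 1}"
proof -
  have vote: "first_in n {1, l + 1} (seeds j) = vote_final l (seeds j)" if "j < m" for j
    using first_in_final[OF n(2,3) seeds_range[OF that]] .
  show "Xi n m seeds {1, l + 1} (l + 1) = seed_count m seeds {2..l + 1}"
  proof (rule Xi_eq_seed_count)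
    fix j assume "j < m"
    then show "first_in n {1, l + 1} (seeds j) = l + 1 \<longleftrightarrow> seeds j \<in> {2..l + 1}"
      unfolding vote[OF \<open>j < m\<close>] vote_final_def using n(3) by auto
  qed
  have "Xi n m seeds {1, l + 1} 1 = seed_count m seeds (- {2..l + 1})"
  proof (rule Xi_eq_seed_count)
    fix j assume "j < m"
    then show "first_in n {1, l + 1} (seeds j) = 1 \<longleftrightarrow> seeds j \<in> - {2..l + 1}"
      unfolding vote[OF \<open>j < m\<close>] vote_final_def using n(3) by auto
  qed
  then show "Xi n m seeds {1, l + 1} 1 = m - seed_count m seeds {2..l + 1}"
    by (simp add: seed_count_Compl)
qed

lemma wins_two_round_iff_seed_counts:
  "wins_two_round n m seeds (Apart n l) (Bpart n l) 1 \<longleftrightarrow>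
     2 \<le> seed_count m seeds {n - l + 1..n} \<and> 2 \<le> seed_count m seeds {2..l + 1} \<and>
     2 * seed_count m seeds {2..l + 1} < m"
proof -
  have "wins_two_round n m seeds (Apart n l) (Bpart n l) 1 \<longleftrightarrow>
      2 \<le> seed_count m seeds {n - l + 1..n} \<and> 2 \<le> seed_count m seeds {2..l + 1} \<and>
      Xi n m seeds {1, l + 1} (l + 1) < Xi n m seeds {1, l + 1} 1"
    using n(3) by (auto simp: wins_two_round_def winner_Apart winner_Bpart)
  then show ?thesis unfolding Xi_final by linarith
qed

end

section \<open>Counting seed vectors\<close>

lemma card_eq_sum_card_fibres:
  "finite S \<Longrightarrow> finite R \<Longrightarrow> g ` S \<subseteq> R \<Longrightarrow> card S = (\<Sum>y\<in>R. card {x \<in> S. g x = y})"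
  using sum_fun_comp[of S R g "\<lambda>_. 1 :: nat"] by simp

lemma card_PiE_if_if:
  assumes "finite I" "A \<subseteq> I" "B \<subseteq> I - A"
  shows "card (PiE I (\<lambda>j. if j \<in> A then X else if j \<in> B then Y else Z)) =
    card X ^ card A * card Y ^ card B * card Z ^ (card I - card A - card B)"
proof -
  define h where "h j = card (if j \<in> A then X else if j \<in> B then Y else Z)" for j
  have fin: "finite A" "finite B" "finite (I - A - B)" using assms finite_subset by blast+
  have "I = (A \<union> B) \<union> (I - A - B)" using assms by auto
  then have "card (PiE I (\<lambda>j. if j \<in> A then X else if j \<in> B then Y else Z)) =
      prod h ((A \<union> B) \<union> (I - A - B))"
    unfolding h_def using card_PiE[OF assms(1)] by metis
  also have "\<dots> = prod h (A \<union> B) * prod h (I - A - B)"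
    using fin by (intro prod.union_disjoint) auto
  also have "prod h (A \<union> B) = prod h A * prod h B"
    using fin assms(3) by (intro prod.union_disjoint) auto
  also have "prod h A * prod h B * prod h (I - A - B) =
      card X ^ card A * card Y ^ card B * card Z ^ card (I - A - B)"
  proof -
    have "prod h A = (\<Prod>j\<in>A. card X)" unfolding h_def by (rule prod.cong) auto
    moreover have "prod h B = (\<Prod>j\<in>B. card Y)" using assms(3) unfolding h_def by (intro prod.cong) auto
    moreover have "prod h (I - A - B) = (\<Prod>j\<in>I - A - B. card Z)" unfolding h_def by (rule prod.cong) auto
    ultimately show ?thesis by simp
  qed
  also have "card (I - A - B) = card I - card A - card B"
    using assms fin by (simp add: card_Diff_subset Diff_subset_conv)
  finally show ?thesis .
qed

lemma PiE_if_if_eq_preimages: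
  assumes "A \<subseteq> I" "B \<subseteq> I - A" "X \<inter> Y = {}" "X \<inter> Z = {}" "Y \<inter> Z = {}"
  shows "{f \<in> I \<rightarrow>\<^sub>E X \<union> Y \<union> Z. {j \<in> I. f j \<in> X} = A \<and> {j \<in> I. f j \<in> Y} = B} =
    PiE I (\<lambda>j. if j \<in> A then X else if j \<in> B then Y else Z)"
proof (intro equalityI subsetI)
  fix f assume "f \<in> {f \<in> I \<rightarrow>\<^sub>E X \<union> Y \<union> Z. {j \<in> I. f j \<in> X} = A \<and> {j \<in> I. f j \<in> Y} = B}"
  then show "f \<in> PiE I (\<lambda>j. if j \<in> A then X else if j \<in> B then Y else Z)"
    by (auto simp: PiE_iff)
next
  fix f assume f: "f \<in> PiE I (\<lambda>j. if j \<in> A then X else if j \<in> B then Y else Z)"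
  then have "f j \<in> X \<longleftrightarrow> j \<in> A" "f j \<in> Y \<longleftrightarrow> j \<in> B" if "j \<in> I" for j
    using that assms by (auto simp: PiE_iff split: if_splits dest!: bspec[of _ _ j])
  with f show "f \<in> {f \<in> I \<rightarrow>\<^sub>E X \<union> Y \<union> Z. {j \<in> I. f j \<in> X} = A \<and> {j \<in> I. f j \<in> Y} = B}"
    using assms(1,2) by (auto simp: PiE_iff split: if_splits)
qed

lemma card_PiE_preimage_counts:
  fixes X Y Z :: "'b set"
  assumes fin: "finite I" "finite X" "finite Y" "finite Z"
    and disj: "X \<inter> Y = {}" "X \<inter> Z = {}" "Y \<inter> Z = {}"
  shows "card {f \<in> I \<rightarrow>\<^sub>E X \<union> Y \<union> Z. card {j \<in> I. f j \<in> X} = s \<and> card {j \<in> I. f j \<in> Y} = t} =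
    (card I choose s) * ((card I - s) choose t) * (card X ^ s * card Y ^ t * card Z ^ (card I - s - t))"
proof -
  define F where "F = {f \<in> I \<rightarrow>\<^sub>E X \<union> Y \<union> Z. card {j \<in> I. f j \<in> X} = s \<and> card {j \<in> I. f j \<in> Y} = t}"
  define T where "T = (SIGMA A:{A. A \<subseteq> I \<and> card A = s}. {B. B \<subseteq> I - A \<and> card B = t})"
  define g where "g f = ({j \<in> I. f j \<in> X}, {j \<in> I. f j \<in> Y})" for f :: "'a \<Rightarrow> 'b"
  have finT: "finite T" unfolding T_def using fin(1) by (auto intro!: finite_SigmaI)
  have "g ` F \<subseteq> T" using disj unfolding F_def T_def g_def by auto
  then have "card F = (\<Sum>p\<in>T. card {f \<in> F. g f = p})"
    using finT fin by (intro card_eq_sum_card_fibres) (auto simp: F_def intro!: finite_PiE)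
  also have "\<dots> = (\<Sum>p\<in>T. card X ^ s * card Y ^ t * card Z ^ (card I - s - t))"
  proof (rule sum.cong[OF refl])
    fix p assume "p \<in> T"
    then obtain A B where p: "p = (A, B)" "A \<subseteq> I" "card A = s" "B \<subseteq> I - A" "card B = t"
      unfolding T_def by auto
    have "{f \<in> F. g f = p} = PiE I (\<lambda>j. if j \<in> A then X else if j \<in> B then Y else Z)"
      unfolding PiE_if_if_eq_preimages[OF p(2,4) disj, symmetric] F_def g_def using p by auto
    then show "card {f \<in> F. g f = p} = card X ^ s * card Y ^ t * card Z ^ (card I - s - t)"
      using card_PiE_if_if[OF fin(1) p(2,4)] p by simp
  qed
  also have "\<dots> = card T * (card X ^ s * card Y ^ t * card Z ^ (card I - s - t))"
    by simp
  also have "card T = (card I choose s) * ((card I - s) choose t)"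
  proof -
    have "card T = (\<Sum>A\<in>{A. A \<subseteq> I \<and> card A = s}. card {B. B \<subseteq> I - A \<and> card B = t})"
      unfolding T_def using fin(1) by (intro card_SigmaI) auto
    also have "\<dots> = (\<Sum>A\<in>{A. A \<subseteq> I \<and> card A = s}. (card I - s) choose t)"
      using fin(1) by (intro sum.cong refl) (auto simp: n_subsets card_Diff_subset finite_subset)
    finally show ?thesis using n_subsets[OF fin(1)] by simp
  qed
  finally show ?thesis unfolding F_def by simp
qed

lemma seed_count_Un_le:
  "S \<inter> T = {} \<Longrightarrow> seed_count m f S + seed_count m f T \<le> m"
proof -
  assume "S \<inter> T = {}"
  then have "seed_count m f S + seed_count m f T = card ({j \<in> {..<m}. f j \<in> S} \<union> {j \<in> {..<m}. f j \<in> T})"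
    unfolding seed_count_def by (intro card_Un_disjoint[symmetric]) auto
  also have "\<dots> \<le> card {..<m}" by (rule card_mono) auto
  finally show ?thesis by simp
qed

lemma card_seed_vectors_with_counts:
  assumes "2 * l < n"
  shows "card {f \<in> {..<m} \<rightarrow>\<^sub>E {1..n}. seed_count m f {2..l + 1} = s \<and> seed_count m f {n - l + 1..n} = t} =
    (m choose s) * ((m - s) choose t) * (l ^ s * l ^ t * (n - 2 * l) ^ (m - s - t))"
proof -
  let ?X = "{2..l + 1}" and ?Y = "{n - l + 1..n}" and ?Z = "{1} \<union> {l + 2..n - l}"
  have "{1..n} = ?X \<union> ?Y \<union> ?Z" using assms by auto
  moreover have "card ?Z = n - 2 * l" using assms by (subst card_Un_disjoint) auto
  ultimately show ?thesis
    using card_PiE_preimage_counts[of "{..<m}" ?X ?Y ?Z s t] assms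
    unfolding seed_count_def by auto
qed

lemma card_winning_seed_vectors:
  assumes "2 * l < n"
  shows "card {f \<in> {..<m} \<rightarrow>\<^sub>E {1..n}. 2 \<le> seed_count m f {n - l + 1..n} \<and>
      2 \<le> seed_count m f {2..l + 1} \<and> 2 * seed_count m f {2..l + 1} < m} =
    (\<Sum>s = 2..(m - 1) div 2. \<Sum>t = 2..m - s.
      (m choose s) * ((m - s) choose t) * (l ^ s * l ^ t * (n - 2 * l) ^ (m - s - t)))"
proof -
  define W where "W = {f \<in> {..<m} \<rightarrow>\<^sub>E {1..n}. 2 \<le> seed_count m f {n - l + 1..n} \<and>
      2 \<le> seed_count m f {2..l + 1} \<and> 2 * seed_count m f {2..l + 1} < m}"
  define K where "K = (SIGMA s:{2..(m - 1) div 2}. {2..m - s})"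
  define g where "g f = (seed_count m f {2..l + 1}, seed_count m f {n - l + 1..n})" for f
  have half: "2 * c < m \<longleftrightarrow> c \<le> (m - 1) div 2" if "2 \<le> c" for c :: nat
    using that by (simp add: less_eq_div_iff_mult_less_eq) linarith
  have disj: "{2..l + 1} \<inter> {n - l + 1..n} = {}" using assms by auto
  have fibre: "f \<in> W \<and> g f = (s, t) \<longleftrightarrow> f \<in> {..<m} \<rightarrow>\<^sub>E {1..n} \<and>
      seed_count m f {2..l + 1} = s \<and> seed_count m f {n - l + 1..n} = t" if "(s, t) \<in> K" for f s t
    using that half[of s] unfolding W_def K_def g_def by auto
  have "g ` W \<subseteq> K"
  proof
    fix p assume "p \<in> g ` W"
    then obtain f where f: "f \<in> W" "p = g f" by blast
    have "seed_count m f {2..l + 1} + seed_count m f {n - l + 1..n} \<le> m"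
      by (rule seed_count_Un_le[OF disj])
    with f half[of "seed_count m f {2..l + 1}"] show "p \<in> K" unfolding W_def K_def g_def by auto
  qed
  moreover have "finite W" unfolding W_def using finite_PiE[of "{..<m}" "\<lambda>_. {1..n}"] by simp
  moreover have "finite K" unfolding K_def by (intro finite_SigmaI) auto
  ultimately have "card W = (\<Sum>p\<in>K. card {f \<in> W. g f = p})"
    by (intro card_eq_sum_card_fibres)
  also have "\<dots> = (\<Sum>(s, t)\<in>K. (m choose s) * ((m - s) choose t) * (l ^ s * l ^ t * (n - 2 * l) ^ (m - s - t)))"
  proof (intro sum.cong refl, clarify)
    fix s t assume "(s, t) \<in> K"
    then have "{f \<in> W. g f = (s, t)} = {f \<in> {..<m} \<rightarrow>\<^sub>E {1..n}.
        seed_count m f {2..l + 1} = s \<and> seed_count m f {n - l + 1..n} = t}"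
      using fibre by blast
    then show "card {f \<in> W. g f = (s, t)} =
        (m choose s) * ((m - s) choose t) * (l ^ s * l ^ t * (n - 2 * l) ^ (m - s - t))"
      using card_seed_vectors_with_counts[OF assms, of m s t] by simp
  qed
  also have "\<dots> = (\<Sum>s = 2..(m - 1) div 2. \<Sum>t = 2..m - s.
      (m choose s) * ((m - s) choose t) * (l ^ s * l ^ t * (n - 2 * l) ^ (m - s - t)))"
    unfolding K_def by (rule sum.Sigma[symmetric]) auto
  finally show ?thesis unfolding W_def .
qed

lemma multinomial_term_eq:
  assumes "s + t \<le> m" "2 * l \<le> n" "0 < n"
  shows "real ((m choose s) * ((m - s) choose t) * (l ^ s * l ^ t * (n - 2 * l) ^ (m - s - t))) / real n ^ m =
    fact m / (fact s * fact t * fact (m - s - t)) * (real l / real n) ^ (s + t) *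
      (1 - 2 * (real l / real n)) ^ (m - s - t)"
proof -
  have b1: "real (m choose s) = fact m / (fact s * fact (m - s))"
    using assms(1) by (intro binomial_fact) simp
  have b2: "real ((m - s) choose t) = fact (m - s) / (fact t * fact (m - s - t))"
    using assms(1) binomial_fact[of t "m - s", where 'a = real] by simp
  have ff: "fact m / (fact s * fact (m - s)) * (fact (m - s) / (fact t * fact (m - s - t))) =
      (fact m / (fact s * fact t * fact (m - s - t)) :: real)"
    by (simp add: field_simps)
  have nz: "real n \<noteq> 0" using assms(3) by simp
  have d: "real (n - 2 * l) = real n - 2 * real l" using assms(2) by simp
  have "1 - 2 * (real l / real n) = (real n - 2 * real l) / real n" using nz by (simp add: field_simps)
  then have p1: "(1 - 2 * (real l / real n)) ^ (m - s - t) =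
      (real n - 2 * real l) ^ (m - s - t) / real n ^ (m - s - t)"
    by (simp add: power_divide)
  have p2: "(real l / real n) ^ (s + t) = real l ^ s * real l ^ t / real n ^ (s + t)"
    by (simp add: power_divide power_add)
  have nm: "real n ^ m = real n ^ (s + t) * real n ^ (m - s - t)"
    using assms(1) by (simp flip: power_add)
  show ?thesis
    unfolding of_nat_mult b1 b2 of_nat_power d p1 p2 nm using nz ff[symmetric] by (simp add: field_simps)
qed

lemma card_winning_seed_vectors_eq_p_inf:
  assumes "2 * l < n"
  shows "real (card {f \<in> {..<m} \<rightarrow>\<^sub>E {1..n}. 2 \<le> seed_count m f {n - l + 1..n} \<and>
      2 \<le> seed_count m f {2..l + 1} \<and> 2 * seed_count m f {2..l + 1} < m}) / real n ^ m =
    p_inf m (real l / real n)"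
  unfolding card_winning_seed_vectors[OF assms] p_inf_def of_nat_sum sum_divide_distrib
  using assms by (intro sum.cong refl multinomial_term_eq) auto

lemma card_PiE_determined_coordinate_le:
  assumes "finite I" "finite U" "k \<in> I"
  shows "card {f \<in> I \<rightarrow>\<^sub>E U. f k = F (restrict f (I - {k}))} \<le> card U ^ (card I - 1)"
proof -
  have "{f \<in> I \<rightarrow>\<^sub>E U. f k = F (restrict f (I - {k}))} \<subseteq> (\<lambda>g. g(k := F g)) ` (I - {k} \<rightarrow>\<^sub>E U)"
  proof
    fix f assume f: "f \<in> {f \<in> I \<rightarrow>\<^sub>E U. f k = F (restrict f (I - {k}))}"
    then have "f = (restrict f (I - {k}))(k := F (restrict f (I - {k})))"
      using assms(3) by (auto simp: fun_eq_iff PiE_iff extensional_def)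
    moreover have "restrict f (I - {k}) \<in> I - {k} \<rightarrow>\<^sub>E U" using f by auto
    ultimately show "f \<in> (\<lambda>g. g(k := F g)) ` (I - {k} \<rightarrow>\<^sub>E U)" by (rule image_eqI)
  qed
  then have "card {f \<in> I \<rightarrow>\<^sub>E U. f k = F (restrict f (I - {k}))} \<le> card (I - {k} \<rightarrow>\<^sub>E U)"
    using assms(1,2) by (meson card_image_le card_mono finite_Diff finite_PiE finite_imageI order_trans)
  also have "\<dots> = card U ^ (card I - 1)"
    using assms by (simp add: card_PiE)
  finally show ?thesis .
qed

lemma non_sparse_seed_vectors_subset:
  "{f \<in> {..<m} \<rightarrow>\<^sub>E {1..n}. \<not> sparse_seeds m f} \<subseteq>
     (\<Union>j<m. {f \<in> {..<m} \<rightarrow>\<^sub>E {1..n}. f j = 1}) \<union>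
     (\<Union>(j, j', c) \<in> {..<m} \<times> {..<m} \<times> {0, 1}. {f \<in> {..<m} \<rightarrow>\<^sub>E {1..n}. j \<noteq> j' \<and> f j' = f j + c})"
proof
  fix f assume f: "f \<in> {f \<in> {..<m} \<rightarrow>\<^sub>E {1..n}. \<not> sparse_seeds m f}"
  then consider j where "j < m" "f j = 1"
    | j j' c where "j < m" "j' < m" "j \<noteq> j'" "c \<in> {0, 1}" "f j' = f j + c"
    unfolding sparse_seeds_def by fastforce
  then show "f \<in> (\<Union>j<m. {f \<in> {..<m} \<rightarrow>\<^sub>E {1..n}. f j = 1}) \<union>
     (\<Union>(j, j', c) \<in> {..<m} \<times> {..<m} \<times> {0, 1}. {f \<in> {..<m} \<rightarrow>\<^sub>E {1..n}. j \<noteq> j' \<and> f j' = f j + c})"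
    using f by cases blast+
qed

lemma card_non_sparse_seed_vectors_le:
  "card {f \<in> {..<m} \<rightarrow>\<^sub>E {1..n}. \<not> sparse_seeds m f} \<le> (m + 2 * m * m) * n ^ (m - 1)"
proof -
  let ?P = "{..<m} \<rightarrow>\<^sub>E {1..n}"
  define S1 where "S1 j = {f \<in> ?P. f j = 1}" for j
  define S2 where "S2 = (\<lambda>(j, j', c). {f \<in> ?P. j \<noteq> j' \<and> f j' = f j + c})"
  define J where "J = {..<m} \<times> {..<m} \<times> {0, 1 :: nat}"
  have finP: "finite ?P" by (simp add: finite_PiE)
  have bound: "card {f \<in> ?P. f k = F (restrict f ({..<m} - {k}))} \<le> n ^ (m - 1)" if "k < m" for k F
    using card_PiE_determined_coordinate_le[of "{..<m}" "{1..n}" k F] that by simp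
  have "{f \<in> ?P. \<not> sparse_seeds m f} \<subseteq> (\<Union>j<m. S1 j) \<union> (\<Union>i\<in>J. S2 i)"
    using non_sparse_seed_vectors_subset unfolding S1_def S2_def J_def .
  moreover have "(\<Union>j<m. S1 j) \<union> (\<Union>i\<in>J. S2 i) \<subseteq> ?P"
    unfolding S1_def S2_def by (auto split: prod.splits)
  ultimately have "card {f \<in> ?P. \<not> sparse_seeds m f} \<le> card ((\<Union>j<m. S1 j) \<union> (\<Union>i\<in>J. S2 i))"
    using finP by (meson card_mono finite_subset)
  also have "\<dots> \<le> (\<Sum>j<m. card (S1 j)) + (\<Sum>i\<in>J. card (S2 i))"
    by (intro order_trans[OF card_Un_le] add_mono card_UN_le) (auto simp: J_def)
  also have "\<dots> \<le> m * n ^ (m - 1) + card J * n ^ (m - 1)"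
  proof (intro add_mono)
    show "(\<Sum>j<m. card (S1 j)) \<le> m * n ^ (m - 1)"
      using sum_bounded_above[of "{..<m}" "\<lambda>j. card (S1 j)" "n ^ (m - 1)"] bound[of _ "\<lambda>_. 1"]
      unfolding S1_def by simp
    have "card (S2 i) \<le> n ^ (m - 1)" if "i \<in> J" for i
    proof -
      obtain j j' c where i: "i = (j, j', c)" "j < m" "j' < m" using \<open>i \<in> J\<close> unfolding J_def by auto
      show ?thesis
      proof (cases "j = j'")
        case False
        with i have "S2 i = {f \<in> ?P. f j' = (\<lambda>g. g j + c) (restrict f ({..<m} - {j'}))}"
          unfolding S2_def by auto
        then show ?thesis using bound[OF i(3), of "\<lambda>g. g j + c"] by (simp only:)
      qed (simp add: S2_def i)
    qed
    then have "(\<Sum>i\<in>J. card (S2 i)) \<le> of_nat (card J) * n ^ (m - 1)"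
      by (rule sum_bounded_above)
    then show "(\<Sum>i\<in>J. card (S2 i)) \<le> card J * n ^ (m - 1)" by simp
  qed
  also have "card J = 2 * m * m" unfolding J_def by (simp add: card_cartesian_product)
  finally show ?thesis by (simp add: algebra_simps)
qed

lemma card_diff_le_card_if_agree_outside:
  assumes "finite A" "finite B" "finite D" "A - D = B - D"
  shows "\<bar>real (card A) - real (card B)\<bar> \<le> real (card D)"
proof -
  have "card X \<le> card B + card D" if "finite B" "X - D = B - D" for X B
  proof -
    have "card X \<le> card (B \<union> D)" using that assms(3) by (intro card_mono) auto
    also have "\<dots> \<le> card B + card D" by (rule card_Un_le)
    finally show ?thesis .
  qed
  from this[of B A] this[of A B] show ?thesis using assms by fastforce
qed

lemma p1_approx_p_inf:
  assumes n: "even n" "2 * l + 2 \<le> n" "2 \<le> l" and m: "2 \<le> m"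
  shows "\<bar>p1 n m l - p_inf m (real l / real n)\<bar> \<le> real (m + 2 * m * m) / real n"
proof -
  let ?P = "{..<m} \<rightarrow>\<^sub>E {1..n}"
  define W where "W = {f \<in> ?P. wins_two_round n m f (Apart n l) (Bpart n l) 1}"
  define E where "E = {f \<in> ?P. 2 \<le> seed_count m f {n - l + 1..n} \<and>
      2 \<le> seed_count m f {2..l + 1} \<and> 2 * seed_count m f {2..l + 1} < m}"
  define D where "D = {f \<in> ?P. \<not> sparse_seeds m f}"
  have fin: "finite W" "finite E" "finite D"
    unfolding W_def E_def D_def by (simp_all add: finite_PiE)
  have "f \<in> W \<longleftrightarrow> f \<in> E" if "f \<in> ?P" "f \<notin> D" for f
    using that wins_two_round_iff_seed_counts[OF n m that(1)] unfolding W_def E_def D_def by simp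
  then have "W - D = E - D" unfolding W_def E_def by blast
  with fin have "\<bar>real (card W) - real (card E)\<bar> \<le> real (card D)"
    by (intro card_diff_le_card_if_agree_outside)
  also have "\<dots> \<le> real (m + 2 * m * m) * real n ^ (m - 1)"
    using card_non_sparse_seed_vectors_le[of m n] unfolding D_def of_nat_mult[symmetric] of_nat_power[symmetric]
    by (rule of_nat_mono)
  finally have diff: "\<bar>real (card W) - real (card E)\<bar> \<le> real (m + 2 * m * m) * real n ^ (m - 1)" .
  have "p1 n m l = real (card W) / real n ^ m" unfolding p1_def W_def ..
  moreover have "p_inf m (real l / real n) = real (card E) / real n ^ m"
    unfolding E_def by (rule card_winning_seed_vectors_eq_p_inf[symmetric]) (use n(2) in linarith)
  ultimately have "\<bar>p1 n m l - p_inf m (real l / real n)\<bar> = \<bar>real (card W) - real (card E)\<bar> / real n ^ m"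
    by (simp add: diff_divide_distrib[symmetric] abs_divide)
  also have "\<dots> \<le> real (m + 2 * m * m) * real n ^ (m - 1) / real n ^ m"
    using diff by (rule divide_right_mono) simp
  also have "\<dots> = real (m + 2 * m * m) / real n"
  proof -
    have "real n ^ m = real n * real n ^ (m - 1)" using m by (simp flip: power_Suc)
    then show ?thesis using n(2) by (simp only:) simp
  qed
  finally show ?thesis .
qed

section \<open>Convergence of the optimal ratio\<close>

lemma tendsto_infdist_maximisers:
  fixes g :: "'a::metric_space \<Rightarrow> real"
  assumes K: "compact K" "continuous_on K g"
    and max: "z \<in> K" "\<forall>y\<in>K. g y \<le> g z"
    and x: "\<forall>\<^sub>F k in sequentially. x k \<in> K" "(\<lambda>k. g (x k)) \<longlonglongrightarrow> g z"
  shows "(\<lambda>k. infdist (x k) {w \<in> K. \<forall>y\<in>K. g y \<le> g w}) \<longlonglongrightarrow> 0"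
proof (rule tendstoI)
  fix \<delta> :: real assume "\<delta> > 0"
  define E where "E = {w \<in> K. \<forall>y\<in>K. g y \<le> g w}"
  define K\<delta> where "K\<delta> = K \<inter> {w. \<delta> \<le> infdist w E}"
  have "\<forall>\<^sub>F k in sequentially. x k \<notin> K\<delta>"
  proof (cases "K\<delta> = {}")
    case False
    have "compact K\<delta>"
      unfolding K\<delta>_def by (intro compact_Int_closed K closed_Collect_le continuous_intros)
    then obtain w where w: "w \<in> K\<delta>" "\<forall>y\<in>K\<delta>. g y \<le> g w"
      using continuous_attains_sup[OF _ False continuous_on_subset[OF K(2)]] K\<delta>_def by blast
    have "w \<notin> E" using w(1) \<open>\<delta> > 0\<close> unfolding K\<delta>_def by auto
    then have "g w < g z" using w(1) max unfolding E_def K\<delta>_def by force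
    then have "\<forall>\<^sub>F k in sequentially. g w < g (x k)" by (rule order_tendstoD(1)[OF x(2)])
    then show ?thesis by eventually_elim (use w(2) in force)
  qed simp
  with x(1) show "\<forall>\<^sub>F k in sequentially. dist (infdist (x k) {w \<in> K. \<forall>y\<in>K. g y \<le> g w}) 0 < \<delta>"
    by eventually_elim (auto simp: K\<delta>_def E_def infdist_nonneg)
qed

lemma floor_ratio_tendsto:
  fixes e :: real
  assumes "0 \<le> e"
  shows "(\<lambda>k. real (nat \<lfloor>real k * e\<rfloor>) / real k) \<longlonglongrightarrow> e"
proof (rule tendsto_sandwich[of "\<lambda>k. e - 1 / real k" _ _ "\<lambda>_. e"])
  have bounds: "e - 1 / real k \<le> real (nat \<lfloor>real k * e\<rfloor>) / real k \<and> real (nat \<lfloor>real k * e\<rfloor>) / real k \<le> e"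
    if "0 < k" for k :: nat
  proof -
    let ?y = "real k * e"
    have "real (nat \<lfloor>?y\<rfloor>) = real_of_int \<lfloor>?y\<rfloor>" using assms by simp
    moreover have "(?y - 1) / real k \<le> real_of_int \<lfloor>?y\<rfloor> / real k"
      by (rule divide_right_mono) linarith+
    moreover have "real_of_int \<lfloor>?y\<rfloor> / real k \<le> ?y / real k"
      by (rule divide_right_mono) simp_all
    moreover have "(?y - 1) / real k = e - 1 / real k" "?y / real k = e"
      using that by (simp_all add: field_simps)
    ultimately show ?thesis by simp
  qed
  show "\<forall>\<^sub>F k in sequentially. e - 1 / real k \<le> real (nat \<lfloor>real k * e\<rfloor>) / real k"
    using eventually_gt_at_top[of 0] by eventually_elim (use bounds in blast)
  show "\<forall>\<^sub>F k in sequentially. real (nat \<lfloor>real k * e\<rfloor>) / real k \<le> e"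
    using eventually_gt_at_top[of 0] by eventually_elim (use bounds in blast)
  show "(\<lambda>k. e - 1 / real k) \<longlonglongrightarrow> e"
    using tendsto_diff[OF tendsto_const lim_const_over_n[of 1]] by simp
qed simp

lemma eventually_floor_admissible:
  fixes e :: real
  assumes "0 < e" "e < 1/2"
  shows "\<forall>\<^sub>F k in sequentially. nat \<lfloor>real (2 * k) * e\<rfloor> \<in> {2..k - 1}"
proof -
  have "\<forall>\<^sub>F k in sequentially. max (1 / e) (1 / (1 - 2 * e)) \<le> real k"
    using filterlim_real_sequentially unfolding filterlim_at_top by blast
  then show ?thesis
  proof eventually_elim
    fix k assume "max (1 / e) (1 / (1 - 2 * e)) \<le> real k"
    then have "1 \<le> real k * e" "1 \<le> real k * (1 - 2 * e)"
      using assms by (auto simp: field_simps)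
    then have "2 \<le> real (2 * k) * e" "real (2 * k) * e \<le> real k - 1"
      by (simp_all add: algebra_simps)
    then have "2 \<le> \<lfloor>real (2 * k) * e\<rfloor>" "\<lfloor>real (2 * k) * e\<rfloor> \<le> int k - 1"
      by (simp_all add: le_floor_iff floor_le_iff) linarith
    then have "nat 2 \<le> nat \<lfloor>real (2 * k) * e\<rfloor>" "nat \<lfloor>real (2 * k) * e\<rfloor> \<le> nat (int k - 1)"
      by (simp_all only: nat_mono)
    then show "nat \<lfloor>real (2 * k) * e\<rfloor> \<in> {2..k - 1}" by simp
  qed
qed

lemma continuous_on_p_inf: "continuous_on A (p_inf m)"
  unfolding p_inf_def by (intro continuous_intros)

lemma Estar_nonempty: "Estar m \<noteq> {}"
proof -
  have "\<exists>z\<in>{0..1/2}. \<forall>y\<in>{0..1/2}. p_inf m y \<le> p_inf m z"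
    by (rule continuous_attains_sup) (simp_all add: continuous_on_p_inf)
  then show ?thesis unfolding Estar_def by blast
qed

lemma zero_in_Estar_if_small:
  assumes "m < 5"
  shows "0 \<in> Estar m"
proof -
  have "(m - 1) div 2 < 2" using assms by simp
  then have "p_inf m = (\<lambda>_. 0)" unfolding p_inf_def by simp
  then show ?thesis unfolding Estar_def by simp
qed

lemma optimal_ratio_eventually_le_half:
  assumes "\<And>n. even n \<Longrightarrow> 6 \<le> n \<Longrightarrow> lopt n \<in> {2..n div 2 - 1}"
  shows "\<forall>\<^sub>F k in sequentially. real (lopt (2 * k)) / real (2 * k) \<in> {0..1/2}"
  using eventually_ge_at_top[of 3]
proof eventually_elim
  fix k :: nat assume "3 \<le> k"
  then have "lopt (2 * k) \<le> k" using assms[of "2 * k"] by auto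
  then show "real (lopt (2 * k)) / real (2 * k) \<in> {0..1/2}" using \<open>3 \<le> k\<close> by (simp add: divide_le_eq)
qed

lemma p_inf_ratio_le_of_p1_le:
  assumes "2 \<le> m" "l \<in> {2..k - 1}" "L \<in> {2..k - 1}" "p1 (2 * k) m l \<le> p1 (2 * k) m L"
  shows "p_inf m (real l / real (2 * k)) - real (m + 2 * m * m) / real k \<le> p_inf m (real L / real (2 * k))"
proof -
  have approx: "\<bar>p1 (2 * k) m i - p_inf m (real i / real (2 * k))\<bar> \<le> real (m + 2 * m * m) / real (2 * k)"
    if "i \<in> {2..k - 1}" for i
    using that assms(1) by (intro p1_approx_p_inf) auto
  have "real (m + 2 * m * m) / real (2 * k) + real (m + 2 * m * m) / real (2 * k) =
      real (m + 2 * m * m) / real k" by simp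
  with approx[OF assms(2)] approx[OF assms(3)] assms(4) show ?thesis by linarith
qed

lemma p_inf_optimal_ratio_tendsto:
  assumes m: "2 \<le> m" and z: "z \<in> Estar m" "0 < z" "z < 1/2"
    and lopt: "\<And>n. even n \<Longrightarrow> 6 \<le> n \<Longrightarrow>
                 lopt n \<in> {2..n div 2 - 1} \<and> (\<forall>l \<in> {2..n div 2 - 1}. p1 n m l \<le> p1 n m (lopt n))"
  shows "(\<lambda>k. p_inf m (real (lopt (2 * k)) / real (2 * k))) \<longlonglongrightarrow> p_inf m z"
proof -
  \<comment> \<open>Squeeze: lopt beats the admissible choice lz k, whose ratio tends to z.\<close>
  define C where "C = real (m + 2 * m * m)"
  define lz where "lz k = nat \<lfloor>real (2 * k) * z\<rfloor>" for k
  have "(\<lambda>k. real (lz k) / real (2 * k)) \<longlonglongrightarrow> z"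
    using LIMSEQ_subseq_LIMSEQ[OF floor_ratio_tendsto[of z], of "\<lambda>k. 2 * k"] z(2)
    by (simp add: strict_mono_def lz_def comp_def)
  then have "(\<lambda>k. p_inf m (real (lz k) / real (2 * k))) \<longlonglongrightarrow> p_inf m z"
    by (rule continuous_on_tendsto_compose[OF continuous_on_p_inf[of UNIV]]) simp_all
  then have lower_lim: "(\<lambda>k. p_inf m (real (lz k) / real (2 * k)) - C / real k) \<longlonglongrightarrow> p_inf m z"
    using tendsto_diff[OF _ lim_const_over_n[of C]] by simp
  show ?thesis
  proof (rule tendsto_sandwich[OF _ _ lower_lim tendsto_const])
    show "\<forall>\<^sub>F k in sequentially. p_inf m (real (lz k) / real (2 * k)) - C / real k \<le>
        p_inf m (real (lopt (2 * k)) / real (2 * k))"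
      using eventually_floor_admissible[OF z(2,3)]
    proof eventually_elim
      case (elim k)
      then have "lz k \<in> {2..k - 1}" unfolding lz_def .
      with lopt[of "2 * k"] show ?case
        unfolding C_def by (intro p_inf_ratio_le_of_p1_le[OF m]) auto
    qed
    have "\<forall>\<^sub>F k in sequentially. real (lopt (2 * k)) / real (2 * k) \<in> {0..1/2}"
      using lopt by (intro optimal_ratio_eventually_le_half) blast
    then show "\<forall>\<^sub>F k in sequentially. p_inf m (real (lopt (2 * k)) / real (2 * k)) \<le> p_inf m z"
      by (rule eventually_mono) (use z(1) in \<open>auto simp: Estar_def\<close>)
  qed
qed

theorem mainTheorem12:
  fixes m :: nat and lopt :: "nat \<Rightarrow> nat"
  assumes inside: "Estar m \<subseteq> {0<..<1/2}"
    and lopt: "\<And>n. even n \<Longrightarrow> 6 \<le> n \<Longrightarrow>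
                 lopt n \<in> {2..n div 2 - 1} \<and>
                 (\<forall>l \<in> {2..n div 2 - 1}. p1 n m l \<le> p1 n m (lopt n))"
  shows "(\<lambda>k. INF \<eta>\<in>Estar m. \<bar>real (lopt (2 * k)) / real (2 * k) - \<eta>\<bar>) \<longlonglongrightarrow> 0 \<and>
         (\<forall>\<eta>opt. Estar m = {\<eta>opt} \<longrightarrow>
           (\<lambda>k. real (lopt (2 * k)) / real (2 * k)) \<longlonglongrightarrow> \<eta>opt)"
proof -
  define x where "x k = real (lopt (2 * k)) / real (2 * k)" for k
  have "2 \<le> m" using zero_in_Estar_if_small[of m] inside by force
  obtain z where z: "z \<in> Estar m" using Estar_nonempty by blast
  with inside have "0 < z" "z < 1/2" by auto
  have "\<forall>\<^sub>F k in sequentially. x k \<in> {0..1/2}"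
    unfolding x_def using lopt by (intro optimal_ratio_eventually_le_half) blast
  moreover have "(\<lambda>k. p_inf m (x k)) \<longlonglongrightarrow> p_inf m z"
    unfolding x_def using p_inf_optimal_ratio_tendsto[OF \<open>2 \<le> m\<close> z \<open>0 < z\<close> \<open>z < 1/2\<close> lopt] .
  ultimately have "(\<lambda>k. infdist (x k) (Estar m)) \<longlonglongrightarrow> 0"
    using z unfolding Estar_def
    by (intro tendsto_infdist_maximisers compact_Icc continuous_on_p_inf) auto
  moreover have "infdist (x k) (Estar m) = (INF \<eta>\<in>Estar m. \<bar>x k - \<eta>\<bar>)" for k
    using Estar_nonempty by (simp add: infdist_notempty dist_real_def)
  ultimately have dist_to_Estar: "(\<lambda>k. INF \<eta>\<in>Estar m. \<bar>x k - \<eta>\<bar>) \<longlonglongrightarrow> 0" by simp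
  moreover have "x \<longlonglongrightarrow> \<eta>" if "Estar m = {\<eta>}" for \<eta>
  proof -
    have "(\<lambda>k. \<bar>x k - \<eta>\<bar>) \<longlonglongrightarrow> 0" using dist_to_Estar that by simp
    then show ?thesis by (simp add: tendsto_rabs_zero_iff LIM_zero_iff)
  qed
  ultimately show ?thesis unfolding x_def by blast
qed

end
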